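(* Let $R,LM,C,\widetilde C,Ceq,\widetilde{Ceq},\sim,\simeq$ be as below. (1) If conditions (1.2), (2b), (2c), (2d) and (4a) hold, then $\sim$ is an equivalence relation on $C$. (2) If in addition conditions (1.3), (3b), (3c), (3d), (4b) and (4c) hold, then $\simeq$ is an equivalence relation on $\widetilde C$. The conditions (for all well-formed data) are: (1.2) $(\Gamma,T\rhd)\Rightarrow(\Gamma\rhd)$; (1.3) $(\Gamma\vdash r:R)\Rightarrow(\Gamma,R\rhd)$; (2b) $(\Gamma,T\rhd)\Rightarrow(\Gamma\vdash T=T)$; (2c) $(\Gamma\vdash T=T')\Rightarrow(\Gamma\vdash T'=T)$; (2d) $(\Gamma\vdash T=T')\wedge(\Gamma\vdash T'=T'')\Rightarrow(\Gamma\vdash T=T'')$; (3b) $(\Gamma\vdash o:T)\Rightarrow(\Gamma\vdash o=o:T)$; (3c) $(\Gamma\vdash o=o':T)\Rightarrow(\Gamma\vdash o'=o:T)$; (3d) $(\Gamma\vdash o=o':T)\wedge(\Gamma\vdash o'=o'':T)\Rightarrow(\Gamma\vdash o=o'':T)$; (4a) $(\Gamma_1\vdash T=T')\wedge(\Gamma_1,T,\Gamma_2\vdash S=S')\Rightarrow(\Gamma_1,T',\Gamma_2\vdash S=S')$; (4b) $(\Gamma_1\vdash T=T')\wedge(\Gamma_1,T,\Gamma_2\vdash o=o':S)\Rightarrow(\Gamma_1,T',\Gamma_2\vdash o=o':S)$; (4c) $(\Gamma\vdash S=S')\wedge(\Gamma\vdash o=o':S)\Rightarrow(\Gamma\vdash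 o=o':S')$.
   Context: $[n]=\{1,\dots,n\}$; $R$ is a monad on Sets and $LM$ a left $R$-module with values in Sets. $C\subset\coprod_n\prod_{j=0}^{n-1}LM([j])$, $\widetilde C\subset\coprod_n(\prod_{j=0}^nLM([j]))\times R([n])$, $Ceq\subset\coprod_n(\prod_{j=0}^{n-1}LM([j]))\times LM([n])^2$, $\widetilde{Ceq}\subset\coprod_n(\prod_{j=0}^nLM([j]))\times R([n])^2$ are subsets. Contexts are sequences $\Gamma=(T_1,\dots,T_n)$, $T_j\in LM([j-1])$, $l(\Gamma)=n$, $ft$ drops the last entry; commas denote concatenation. $(\Gamma\rhd)$: $\Gamma\in C$; $(\Gamma\vdash t:T)$: $(\Gamma,T,t)\in\widetilde C$; $(\Gamma\vdash S=S')$: $(\Gamma,S,S')\in Ceq$; $(\Gamma\vdash o=o':S)$: $(\Gamma,S,o,o')\in\widetilde{Ceq}$. $\sim$ on $C$: $(T_1,\dots,T_n)\sim(T'_1,\dots,T'_n)$ iff $n=0$, or $ft$'s are $\sim$-related and $(T_1,\dots,T_{n-1}\vdash T_n=T'_n)$ (recursive; different lengths never related). $\simeq$ on $\widetilde C$: $(\Gamma\vdash o:S)\simeq(\Gamma'\vdash o':S')$ iff $(\Gamma,S)\sim(\Gamma',S')$ and $(\Gamma\vdash o=o':S)$. *)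

theory Defs
  imports Main
begin

text \<open>The family of sets LM([j]) is modelled as LM :: nat => 'a set (LM j = LM([j])),
  R([n]) as R :: nat => 'r set. A context (T_1,...,T_n) is a list; it is well formed
  if T_j lies in LM([j-1]), i.e. the i-th list entry (0-based) lies in LM i.
  Judgements:  C :: contexts;  Ct holds triples (Gamma, T, t);
  Ceq holds triples (Gamma, S, S');  Ceqt holds quadruples (Gamma, S, o, o').\<close>

definition wf_ctx :: "(nat \<Rightarrow> 'a set) \<Rightarrow> 'a list \<Rightarrow> bool" where
  "wf_ctx LM \<Gamma> \<longleftrightarrow> (\<forall>i<length \<Gamma>. \<Gamma> ! i \<in> LM i)"

definition sys_data ::
  "(nat \<Rightarrow> 'a set) \<Rightarrow> (nat \<Rightarrow> 'r set) \<Rightarrow> 'a list set \<Rightarrow> ('a list \<times> 'a \<times> 'r) set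
   \<Rightarrow> ('a list \<times> 'a \<times> 'a) set \<Rightarrow> ('a list \<times> 'a \<times> 'r \<times> 'r) set \<Rightarrow> bool" where
  "sys_data LM R C Ct Ceq Ceqt \<longleftrightarrow>
     C \<subseteq> {\<Gamma>. wf_ctx LM \<Gamma>} \<and>
     Ct \<subseteq> {(\<Gamma>, T, t). wf_ctx LM \<Gamma> \<and> T \<in> LM (length \<Gamma>) \<and> t \<in> R (length \<Gamma>)} \<and>
     Ceq \<subseteq> {(\<Gamma>, S, S'). wf_ctx LM \<Gamma> \<and> S \<in> LM (length \<Gamma>) \<and> S' \<in> LM (length \<Gamma>)} \<and>
     Ceqt \<subseteq> {(\<Gamma>, S, o1, o2). wf_ctx LM \<Gamma> \<and> S \<in> LM (length \<Gamma>)
                  \<and> o1 \<in> R (length \<Gamma>) \<and> o2 \<in> R (length \<Gamma>)}"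

inductive ctx_sim :: "('a list \<times> 'a \<times> 'a) set \<Rightarrow> 'a list \<Rightarrow> 'a list \<Rightarrow> bool"
  for Ceq where
  nil: "ctx_sim Ceq [] []"
| snoc: "ctx_sim Ceq \<Gamma> \<Gamma>' \<Longrightarrow> (\<Gamma>, T, T') \<in> Ceq \<Longrightarrow> ctx_sim Ceq (\<Gamma> @ [T]) (\<Gamma>' @ [T'])"

definition sim_rel :: "'a list set \<Rightarrow> ('a list \<times> 'a \<times> 'a) set \<Rightarrow> ('a list \<times> 'a list) set" where
  "sim_rel C Ceq = {(\<Gamma>, \<Gamma>'). \<Gamma> \<in> C \<and> \<Gamma>' \<in> C \<and> ctx_sim Ceq \<Gamma> \<Gamma>'}"

definition simeq_rel ::
  "('a list \<times> 'a \<times> 'r) set \<Rightarrow> ('a list \<times> 'a \<times> 'a) set \<Rightarrow> ('a list \<times> 'a \<times> 'r \<times> 'r) set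
   \<Rightarrow> (('a list \<times> 'a \<times> 'r) \<times> ('a list \<times> 'a \<times> 'r)) set" where
  "simeq_rel Ct Ceq Ceqt = {((\<Gamma>, S, o1), (\<Gamma>', S', o2)).
      (\<Gamma>, S, o1) \<in> Ct \<and> (\<Gamma>', S', o2) \<in> Ct \<and>
      ctx_sim Ceq (\<Gamma> @ [S]) (\<Gamma>' @ [S']) \<and> (\<Gamma>, S, o1, o2) \<in> Ceqt}"

definition cond_1_2 where
  "cond_1_2 LM C \<longleftrightarrow> (\<forall>\<Gamma> T. wf_ctx LM (\<Gamma> @ [T]) \<longrightarrow> \<Gamma> @ [T] \<in> C \<longrightarrow> \<Gamma> \<in> C)"

definition cond_1_3 where
  "cond_1_3 LM R C Ct \<longleftrightarrow> (\<forall>\<Gamma> T r. wf_ctx LM (\<Gamma> @ [T]) \<and> r \<in> R (length \<Gamma>) \<longrightarrow>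
      (\<Gamma>, T, r) \<in> Ct \<longrightarrow> \<Gamma> @ [T] \<in> C)"

definition cond_2b where
  "cond_2b LM C Ceq \<longleftrightarrow> (\<forall>\<Gamma> T. wf_ctx LM (\<Gamma> @ [T]) \<longrightarrow> \<Gamma> @ [T] \<in> C \<longrightarrow> (\<Gamma>, T, T) \<in> Ceq)"

definition cond_2c where
  "cond_2c LM Ceq \<longleftrightarrow> (\<forall>\<Gamma> T T'. wf_ctx LM \<Gamma> \<and> T \<in> LM (length \<Gamma>) \<and> T' \<in> LM (length \<Gamma>) \<longrightarrow>
      (\<Gamma>, T, T') \<in> Ceq \<longrightarrow> (\<Gamma>, T', T) \<in> Ceq)"

definition cond_2d where
  "cond_2d LM Ceq \<longleftrightarrow> (\<forall>\<Gamma> T T' T''. wf_ctx LM \<Gamma> \<and> T \<in> LM (length \<Gamma>) \<and> T' \<in> LM (length \<Gamma>)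
      \<and> T'' \<in> LM (length \<Gamma>) \<longrightarrow>
      (\<Gamma>, T, T') \<in> Ceq \<and> (\<Gamma>, T', T'') \<in> Ceq \<longrightarrow> (\<Gamma>, T, T'') \<in> Ceq)"

definition cond_3b where
  "cond_3b LM R Ct Ceqt \<longleftrightarrow> (\<forall>\<Gamma> T o1. wf_ctx LM (\<Gamma> @ [T]) \<and> o1 \<in> R (length \<Gamma>) \<longrightarrow>
      (\<Gamma>, T, o1) \<in> Ct \<longrightarrow> (\<Gamma>, T, o1, o1) \<in> Ceqt)"

definition cond_3c where
  "cond_3c LM R Ceqt \<longleftrightarrow> (\<forall>\<Gamma> T o1 o2. wf_ctx LM (\<Gamma> @ [T]) \<and> o1 \<in> R (length \<Gamma>)
      \<and> o2 \<in> R (length \<Gamma>) \<longrightarrow>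
      (\<Gamma>, T, o1, o2) \<in> Ceqt \<longrightarrow> (\<Gamma>, T, o2, o1) \<in> Ceqt)"

definition cond_3d where
  "cond_3d LM R Ceqt \<longleftrightarrow> (\<forall>\<Gamma> T o1 o2 o3. wf_ctx LM (\<Gamma> @ [T]) \<and> o1 \<in> R (length \<Gamma>)
      \<and> o2 \<in> R (length \<Gamma>) \<and> o3 \<in> R (length \<Gamma>) \<longrightarrow>
      (\<Gamma>, T, o1, o2) \<in> Ceqt \<and> (\<Gamma>, T, o2, o3) \<in> Ceqt \<longrightarrow> (\<Gamma>, T, o1, o3) \<in> Ceqt)"

definition cond_4a where
  "cond_4a LM Ceq \<longleftrightarrow> (\<forall>\<Gamma>1 T T' \<Gamma>2 S S'.
      wf_ctx LM (\<Gamma>1 @ [T] @ \<Gamma>2) \<and> wf_ctx LM (\<Gamma>1 @ [T'] @ \<Gamma>2)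
      \<and> S \<in> LM (length \<Gamma>1 + 1 + length \<Gamma>2) \<and> S' \<in> LM (length \<Gamma>1 + 1 + length \<Gamma>2) \<longrightarrow>
      (\<Gamma>1, T, T') \<in> Ceq \<and> (\<Gamma>1 @ [T] @ \<Gamma>2, S, S') \<in> Ceq \<longrightarrow> (\<Gamma>1 @ [T'] @ \<Gamma>2, S, S') \<in> Ceq)"

definition cond_4b where
  "cond_4b LM R Ceq Ceqt \<longleftrightarrow> (\<forall>\<Gamma>1 T T' \<Gamma>2 S o1 o2.
      wf_ctx LM (\<Gamma>1 @ [T] @ \<Gamma>2) \<and> wf_ctx LM (\<Gamma>1 @ [T'] @ \<Gamma>2)
      \<and> S \<in> LM (length \<Gamma>1 + 1 + length \<Gamma>2)
      \<and> o1 \<in> R (length \<Gamma>1 + 1 + length \<Gamma>2) \<and> o2 \<in> R (length \<Gamma>1 + 1 + length \<Gamma>2) \<longrightarrow>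
      (\<Gamma>1, T, T') \<in> Ceq \<and> (\<Gamma>1 @ [T] @ \<Gamma>2, S, o1, o2) \<in> Ceqt
        \<longrightarrow> (\<Gamma>1 @ [T'] @ \<Gamma>2, S, o1, o2) \<in> Ceqt)"

definition cond_4c where
  "cond_4c LM R Ceq Ceqt \<longleftrightarrow> (\<forall>\<Gamma> S S' o1 o2.
      wf_ctx LM \<Gamma> \<and> S \<in> LM (length \<Gamma>) \<and> S' \<in> LM (length \<Gamma>)
      \<and> o1 \<in> R (length \<Gamma>) \<and> o2 \<in> R (length \<Gamma>) \<longrightarrow>
      (\<Gamma>, S, S') \<in> Ceq \<and> (\<Gamma>, S, o1, o2) \<in> Ceqt \<longrightarrow> (\<Gamma>, S', o1, o2) \<in> Ceqt)"

end

theory Submission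
  imports Defs
begin

text \<open>The only non-local step is that an equation judged in a
  context \<open>\<Gamma>\<close> must be moved to an equivalent context \<open>\<Gamma>'\<close>; condition (4a) does this for
  one entry, so by induction on \<open>\<Gamma> \<sim> \<Gamma>'\<close> it does it for all of them. The relation \<open>\<simeq>\<close>
  then inherits the three properties, using (4b) to move term equations between
  equivalent contexts and (4c) to move them between equal types.\<close>

lemma wf_ctx_snoc: "wf_ctx LM (\<Gamma> @ [T]) \<longleftrightarrow> wf_ctx LM \<Gamma> \<and> T \<in> LM (length \<Gamma>)"
  unfolding wf_ctx_def by (auto simp: nth_append less_Suc_eq)

lemma wf_ctx_replace_middle:
  assumes "wf_ctx LM (\<Gamma>1 @ [T] @ \<Gamma>2)" and "T' \<in> LM (length \<Gamma>1)"
  shows "wf_ctx LM (\<Gamma>1 @ [T'] @ \<Gamma>2)"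
  unfolding wf_ctx_def
proof (intro allI impI)
  fix i assume "i < length (\<Gamma>1 @ [T'] @ \<Gamma>2)"
  then show "(\<Gamma>1 @ [T'] @ \<Gamma>2) ! i \<in> LM i"
    using assms unfolding wf_ctx_def
    by (cases "i = length \<Gamma>1") (auto simp: nth_append split: if_splits)
qed

lemma ctx_sim_snocD:
  assumes "ctx_sim Ceq (\<Gamma> @ [S]) (\<Gamma>' @ [S'])"
  shows "ctx_sim Ceq \<Gamma> \<Gamma>'" and "(\<Gamma>, S, S') \<in> Ceq"
  using assms by (cases rule: ctx_sim.cases; auto)+

locale judgement_system =
  fixes LM :: "nat \<Rightarrow> 'a set" and R :: "nat \<Rightarrow> 'r set"
    and C :: "'a list set" and Ct :: "('a list \<times> 'a \<times> 'r) set"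
    and Ceq :: "('a list \<times> 'a \<times> 'a) set" and Ceqt :: "('a list \<times> 'a \<times> 'r \<times> 'r) set"
  assumes data: "sys_data LM R C Ct Ceq Ceqt"
begin

lemma C_wf: "\<Gamma> \<in> C \<Longrightarrow> wf_ctx LM \<Gamma>"
  using data unfolding sys_data_def by auto

lemma Ct_wf:
  "(\<Gamma>, S, t) \<in> Ct \<Longrightarrow> wf_ctx LM \<Gamma> \<and> S \<in> LM (length \<Gamma>) \<and> t \<in> R (length \<Gamma>)"
  using data unfolding sys_data_def by auto

lemma Ceq_wf:
  "(\<Gamma>, S, S') \<in> Ceq \<Longrightarrow> wf_ctx LM \<Gamma> \<and> S \<in> LM (length \<Gamma>) \<and> S' \<in> LM (length \<Gamma>)"
  using data unfolding sys_data_def by auto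

lemma Ceqt_wf:
  "(\<Gamma>, S, o1, o2) \<in> Ceqt \<Longrightarrow>
     wf_ctx LM \<Gamma> \<and> S \<in> LM (length \<Gamma>) \<and> o1 \<in> R (length \<Gamma>) \<and> o2 \<in> R (length \<Gamma>)"
  using data unfolding sys_data_def by auto

lemma Ceq_sym:
  assumes "cond_2c LM Ceq" and "(\<Gamma>, T, T') \<in> Ceq"
  shows "(\<Gamma>, T', T) \<in> Ceq"
  using assms Ceq_wf unfolding cond_2c_def by blast

lemma Ceq_trans:
  assumes "cond_2d LM Ceq" and "(\<Gamma>, T, T') \<in> Ceq" and "(\<Gamma>, T', T'') \<in> Ceq"
  shows "(\<Gamma>, T, T'') \<in> Ceq"
  using assms Ceq_wf unfolding cond_2d_def by blast

lemma Ceqt_sym: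
  assumes "cond_3c LM R Ceqt" and "(\<Gamma>, S, o1, o2) \<in> Ceqt"
  shows "(\<Gamma>, S, o2, o1) \<in> Ceqt"
  using assms Ceqt_wf unfolding cond_3c_def wf_ctx_snoc by blast

lemma Ceqt_trans:
  assumes "cond_3d LM R Ceqt" and "(\<Gamma>, S, o1, o2) \<in> Ceqt" and "(\<Gamma>, S, o2, o3) \<in> Ceqt"
  shows "(\<Gamma>, S, o1, o3) \<in> Ceqt"
  using assms Ceqt_wf unfolding cond_3d_def wf_ctx_snoc by blast

lemma Ceqt_Ceq_subst:
  assumes "cond_4c LM R Ceq Ceqt" and "(\<Gamma>, S, S') \<in> Ceq" and "(\<Gamma>, S, o1, o2) \<in> Ceqt"
  shows "(\<Gamma>, S', o1, o2) \<in> Ceqt"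
  using assms Ceq_wf Ceqt_wf unfolding cond_4c_def by blast

lemma Ceq_ctx_sim_subst:
  assumes c4a: "cond_4a LM Ceq"
  shows "ctx_sim Ceq \<Gamma> \<Gamma>' \<Longrightarrow> (\<Gamma> @ \<Delta>, S, S') \<in> Ceq \<Longrightarrow> (\<Gamma>' @ \<Delta>, S, S') \<in> Ceq"
proof (induction arbitrary: \<Delta> rule: ctx_sim.induct)
  case nil
  then show ?case by simp
next
  case (snoc \<Gamma> \<Gamma>' T T')
  have eq: "(\<Gamma> @ [T] @ \<Delta>, S, S') \<in> Ceq" using snoc.prems by simp
  have wf: "wf_ctx LM (\<Gamma> @ [T] @ \<Delta>)" "S \<in> LM (length \<Gamma> + 1 + length \<Delta>)"
    "S' \<in> LM (length \<Gamma> + 1 + length \<Delta>)"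
    using Ceq_wf[OF eq] by simp_all
  have "wf_ctx LM (\<Gamma> @ [T'] @ \<Delta>)"
    using wf_ctx_replace_middle[OF wf(1)] Ceq_wf[OF snoc.hyps(2)] by blast
  then have "(\<Gamma> @ [T'] @ \<Delta>, S, S') \<in> Ceq"
    using c4a eq snoc.hyps(2) wf unfolding cond_4a_def by blast
  then show ?case using snoc.IH[of "[T'] @ \<Delta>"] by simp
qed

lemma Ceqt_ctx_sim_subst:
  assumes c4b: "cond_4b LM R Ceq Ceqt"
  shows "ctx_sim Ceq \<Gamma> \<Gamma>' \<Longrightarrow> (\<Gamma> @ \<Delta>, S, o1, o2) \<in> Ceqt \<Longrightarrow> (\<Gamma>' @ \<Delta>, S, o1, o2) \<in> Ceqt"
proof (induction arbitrary: \<Delta> rule: ctx_sim.induct)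
  case nil
  then show ?case by simp
next
  case (snoc \<Gamma> \<Gamma>' T T')
  have eq: "(\<Gamma> @ [T] @ \<Delta>, S, o1, o2) \<in> Ceqt" using snoc.prems by simp
  have wf: "wf_ctx LM (\<Gamma> @ [T] @ \<Delta>)" "S \<in> LM (length \<Gamma> + 1 + length \<Delta>)"
    "o1 \<in> R (length \<Gamma> + 1 + length \<Delta>)" "o2 \<in> R (length \<Gamma> + 1 + length \<Delta>)"
    using Ceqt_wf[OF eq] by simp_all
  have "wf_ctx LM (\<Gamma> @ [T'] @ \<Delta>)"
    using wf_ctx_replace_middle[OF wf(1)] Ceq_wf[OF snoc.hyps(2)] by blast
  then have "(\<Gamma> @ [T'] @ \<Delta>, S, o1, o2) \<in> Ceqt"
    using c4b eq snoc.hyps(2) wf unfolding cond_4b_def by blast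
  then show ?case using snoc.IH[of "[T'] @ \<Delta>"] by simp
qed

lemma ctx_sim_refl:
  assumes c12: "cond_1_2 LM C" and c2b: "cond_2b LM C Ceq"
  shows "\<Gamma> \<in> C \<Longrightarrow> ctx_sim Ceq \<Gamma> \<Gamma>"
proof (induction \<Gamma> rule: rev_induct)
  case Nil
  show ?case by (rule ctx_sim.nil)
next
  case (snoc T \<Gamma>)
  have "\<Gamma> \<in> C" and "(\<Gamma>, T, T) \<in> Ceq"
    using c12 c2b snoc.prems C_wf unfolding cond_1_2_def cond_2b_def by blast+
  then show ?case using snoc.IH by (blast intro: ctx_sim.snoc)
qed

lemma ctx_sim_sym:
  assumes c2c: "cond_2c LM Ceq" and c4a: "cond_4a LM Ceq"
  shows "ctx_sim Ceq \<Gamma> \<Gamma>' \<Longrightarrow> ctx_sim Ceq \<Gamma>' \<Gamma>"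
proof (induction rule: ctx_sim.induct)
  case nil
  show ?case by (rule ctx_sim.nil)
next
  case (snoc \<Gamma> \<Gamma>' T T')
  have "(\<Gamma>', T', T) \<in> Ceq"
    using Ceq_ctx_sim_subst[OF c4a snoc.hyps(1), of "[]"] Ceq_sym[OF c2c snoc.hyps(2)] by simp
  then show ?case using snoc.IH by (simp add: ctx_sim.snoc)
qed

lemma ctx_sim_trans:
  assumes c2c: "cond_2c LM Ceq" and c2d: "cond_2d LM Ceq" and c4a: "cond_4a LM Ceq"
  shows "ctx_sim Ceq \<Gamma> \<Gamma>' \<Longrightarrow> ctx_sim Ceq \<Gamma>' \<Gamma>'' \<Longrightarrow> ctx_sim Ceq \<Gamma> \<Gamma>''"
proof (induction arbitrary: \<Gamma>'' rule: ctx_sim.induct)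
  case nil
  then show ?case by simp
next
  case (snoc \<Gamma> \<Gamma>' T T')
  from snoc.prems obtain \<Gamma>''' T'' where
    "\<Gamma>'' = \<Gamma>''' @ [T'']" and "ctx_sim Ceq \<Gamma>' \<Gamma>'''" and "(\<Gamma>', T', T'') \<in> Ceq"
    by (cases rule: ctx_sim.cases) auto
  moreover have "(\<Gamma>, T', T'') \<in> Ceq"
    using Ceq_ctx_sim_subst[OF c4a ctx_sim_sym[OF c2c c4a snoc.hyps(1)], of "[]"]
      \<open>(\<Gamma>', T', T'') \<in> Ceq\<close>
    by simp
  ultimately show ?case
    using snoc.IH Ceq_trans[OF c2d snoc.hyps(2)] by (simp add: ctx_sim.snoc)
qed

lemma equiv_sim_rel:
  assumes "cond_1_2 LM C" "cond_2b LM C Ceq" "cond_2c LM Ceq" "cond_2d LM Ceq" "cond_4a LM Ceq"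
  shows "equiv C (sim_rel C Ceq)"
proof (rule equivI)
  show "refl_on C (sim_rel C Ceq)"
    using ctx_sim_refl[OF assms(1,2)] unfolding refl_on_def sim_rel_def by auto
  show "sym (sim_rel C Ceq)"
    using ctx_sim_sym[OF assms(3,5)] unfolding sym_def sim_rel_def by auto
  show "trans (sim_rel C Ceq)"
    using ctx_sim_trans[OF assms(3-5)] unfolding trans_def sim_rel_def by blast
qed (auto simp: sim_rel_def)

lemma simeq_rel_refl:
  assumes "cond_1_2 LM C" "cond_2b LM C Ceq" "cond_1_3 LM R C Ct" "cond_3b LM R Ct Ceqt"
    and ct: "(\<Gamma>, S, t) \<in> Ct"
  shows "((\<Gamma>, S, t), (\<Gamma>, S, t)) \<in> simeq_rel Ct Ceq Ceqt"
proof -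
  have wf: "wf_ctx LM (\<Gamma> @ [S])" "t \<in> R (length \<Gamma>)"
    using Ct_wf[OF ct] by (simp_all add: wf_ctx_snoc)
  have "\<Gamma> @ [S] \<in> C" and "(\<Gamma>, S, t, t) \<in> Ceqt"
    using assms(3,4) ct wf unfolding cond_1_3_def cond_3b_def by blast+
  then show ?thesis
    using ct ctx_sim_refl[OF assms(1,2)] unfolding simeq_rel_def by blast
qed

lemma simeq_rel_sym:
  assumes "cond_2c LM Ceq" "cond_4a LM Ceq"
    "cond_3c LM R Ceqt" "cond_4b LM R Ceq Ceqt" "cond_4c LM R Ceq Ceqt"
    and rel: "((\<Gamma>, S, t), (\<Gamma>', S', t')) \<in> simeq_rel Ct Ceq Ceqt"
  shows "((\<Gamma>', S', t'), (\<Gamma>, S, t)) \<in> simeq_rel Ct Ceq Ceqt"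
proof -
  from rel have sim: "ctx_sim Ceq (\<Gamma> @ [S]) (\<Gamma>' @ [S'])" and eq: "(\<Gamma>, S, t, t') \<in> Ceqt"
    unfolding simeq_rel_def by auto
  have "(\<Gamma>, S', t', t) \<in> Ceqt"
    using Ceqt_Ceq_subst[OF assms(5) ctx_sim_snocD(2)[OF sim] Ceqt_sym[OF assms(3) eq]] .
  then have "(\<Gamma>', S', t', t) \<in> Ceqt"
    using Ceqt_ctx_sim_subst[OF assms(4) ctx_sim_snocD(1)[OF sim], of "[]"] by simp
  then show ?thesis
    using rel ctx_sim_sym[OF assms(1,2) sim] unfolding simeq_rel_def by auto
qed

lemma simeq_rel_trans:
  assumes "cond_2c LM Ceq" "cond_2d LM Ceq" "cond_4a LM Ceq"
    "cond_3d LM R Ceqt" "cond_4b LM R Ceq Ceqt" "cond_4c LM R Ceq Ceqt"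
    and rel1: "((\<Gamma>, S, t), (\<Gamma>', S', t')) \<in> simeq_rel Ct Ceq Ceqt"
    and rel2: "((\<Gamma>', S', t'), (\<Gamma>'', S'', t'')) \<in> simeq_rel Ct Ceq Ceqt"
  shows "((\<Gamma>, S, t), (\<Gamma>'', S'', t'')) \<in> simeq_rel Ct Ceq Ceqt"
proof -
  from rel1 have sim1: "ctx_sim Ceq (\<Gamma> @ [S]) (\<Gamma>' @ [S'])" and eq1: "(\<Gamma>, S, t, t') \<in> Ceqt"
    unfolding simeq_rel_def by auto
  from rel2 have sim2: "ctx_sim Ceq (\<Gamma>' @ [S']) (\<Gamma>'' @ [S''])"
    and eq2: "(\<Gamma>', S', t', t'') \<in> Ceqt"
    unfolding simeq_rel_def by auto
  have "(\<Gamma>, S', t', t'') \<in> Ceqt"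
    using Ceqt_ctx_sim_subst[OF assms(5) ctx_sim_sym[OF assms(1,3) ctx_sim_snocD(1)[OF sim1]],
        of "[]"] eq2
    by simp
  then have "(\<Gamma>, S, t', t'') \<in> Ceqt"
    using Ceqt_Ceq_subst[OF assms(6) Ceq_sym[OF assms(1) ctx_sim_snocD(2)[OF sim1]]] by blast
  then have "(\<Gamma>, S, t, t'') \<in> Ceqt"
    using Ceqt_trans[OF assms(4) eq1] by blast
  then show ?thesis
    using rel1 rel2 ctx_sim_trans[OF assms(1-3) sim1 sim2] unfolding simeq_rel_def by auto
qed

lemma equiv_simeq_rel:
  assumes "cond_1_2 LM C" "cond_2b LM C Ceq" "cond_2c LM Ceq" "cond_2d LM Ceq"
    "cond_4a LM Ceq" "cond_1_3 LM R C Ct" "cond_3b LM R Ct Ceqt" "cond_3c LM R Ceqt"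
    "cond_3d LM R Ceqt" "cond_4b LM R Ceq Ceqt" "cond_4c LM R Ceq Ceqt"
  shows "equiv Ct (simeq_rel Ct Ceq Ceqt)"
proof (rule equivI)
  show "refl_on Ct (simeq_rel Ct Ceq Ceqt)"
    using simeq_rel_refl[OF assms(1,2,6,7)] by (auto intro: refl_onI)
  show "sym (simeq_rel Ct Ceq Ceqt)"
    using simeq_rel_sym[OF assms(3,5,8,10,11)] by (auto intro: symI)
  show "trans (simeq_rel Ct Ceq Ceqt)"
    using simeq_rel_trans[OF assms(3,4,5,9,10,11)] by (auto intro: transI)
qed (auto simp: simeq_rel_def)

end

theorem lemma6p4:
  fixes LM :: "nat \<Rightarrow> 'a set" and R :: "nat \<Rightarrow> 'r set"
    and C :: "'a list set" and Ct :: "('a list \<times> 'a \<times> 'r) set"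
    and Ceq :: "('a list \<times> 'a \<times> 'a) set" and Ceqt :: "('a list \<times> 'a \<times> 'r \<times> 'r) set"
  assumes data: "sys_data LM R C Ct Ceq Ceqt"
    and c12: "cond_1_2 LM C" and c2b: "cond_2b LM C Ceq" and c2c: "cond_2c LM Ceq"
    and c2d: "cond_2d LM Ceq" and c4a: "cond_4a LM Ceq"
  shows "equiv C (sim_rel C Ceq) \<and>
         (cond_1_3 LM R C Ct \<and> cond_3b LM R Ct Ceqt \<and> cond_3c LM R Ceqt \<and> cond_3d LM R Ceqt
          \<and> cond_4b LM R Ceq Ceqt \<and> cond_4c LM R Ceq Ceqt
          \<longrightarrow> equiv Ct (simeq_rel Ct Ceq Ceqt))"
proof -
  interpret judgement_system LM R C Ct Ceq Ceqt by (rule judgement_system.intro[OF data])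
  show ?thesis
    using equiv_sim_rel[OF c12 c2b c2c c2d c4a] equiv_simeq_rel[OF c12 c2b c2c c2d c4a] by blast
qed

end
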